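(* Let $\mathbb{F}$ be a field, let $K=\mathbb{F}(a_1,b_1,a_2,b_2,\dots)$ be the purely transcendental extension of $\mathbb{F}$ generated by countably many indeterminates $a_n,b_n$ ($n\ge 1$), let $R=K\llbracket x,y\rrbracket$, and let $\sigma$ be the $\mathbb{F}$-algebra automorphism of $R$ described in the context. Let $G=\langle\sigma\rangle$ be the cyclic group of automorphisms of $R$ generated by $\sigma$. If $K$ has characteristic $p>0$, then $G$ is cyclic of order $p$; if $K$ has characteristic zero, then $G$ is infinite cyclic. In either case, the invariant ring $R^G=\{r\in R:\ g(r)=r \text{ for all } g\in G\}$ is not noetherian.
   Context: Setup: $\mathbb{F}$ is a field; $K=\mathbb{F}(a_1,b_1,a_2,b_2,\dots)$ where the $a_n,b_n$ ($n\ge1$) are algebraically independent indeterminates over $\mathbb{F}$; $R=K\llbracket x,y\rrbracket$ is the formal power series ring in $x,y$ over $K$, with maximal ideal $\mathfrak{m}=(x,y)R$. For $n\ge1$ set $f_n=a_nx+b_ny\in R$. Let $\sigma$ be the $\mathbb{F}$-algebra endomorphism of $R$ with $\sigma(x)=x$, $\sigma(y)=y$, $\sigma(a_n)=a_n+yf_{n+1}$, $\sigma(b_n)=b_n-xf_{n+1}$ for all $n\ge1$. (This is well defined: on $\mathbb{F}[a_1,b_1,\dots][x,y]$ it is given by substitution; nonzero elements of $\mathbb{F}[a_1,b_1,\dots]$ map to elements of $R$ with nonzero constant term, hence units, so the map extends to $K$, and it extends to power series by $\mathfrak{m}$-adic continuity since $\sigma(\mathfrak m)\subseteq\mathfrak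 m$. One has $\sigma(f_n)=f_n$ for all $n$, and $\sigma$ is an automorphism of $R$.) *)

theory Defs
  imports "HOL-Library.Poly_Mapping"
          "HOL-Computational_Algebra.Fraction_Field"
          "HOL-Computational_Algebra.Formal_Power_Series"
          "HOL-Algebra.Ring_Divisibility"
begin

text \<open>Polynomial ring F[a_1,b_1,a_2,b_2,...]: variables indexed by nat,
  a_n is variable 2n-2 and b_n is variable 2n-1 (n >= 1), so every variable is used.\<close>
type_synonym 'f Pol = "(nat \<Rightarrow>\<^sub>0 nat) \<Rightarrow>\<^sub>0 'f"

type_synonym 'f Kfield = "'f Pol fract"

text \<open>R = K[[x,y]], realised as (K[[y]])[[x]].\<close>
type_synonym 'f Rring = "'f Kfield fps fps"

definition polvar :: "nat \<Rightarrow> 'f::field Pol" where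
  "polvar i = Poly_Mapping.single (Poly_Mapping.single i 1) 1"

definition polconst :: "'f::field \<Rightarrow> 'f Pol" where
  "polconst c = Poly_Mapping.single 0 c"

definition Kc :: "'f::field Kfield \<Rightarrow> 'f Rring" where
  "Kc k = fps_const (fps_const k)"

definition aK :: "nat \<Rightarrow> 'f::field Kfield" where
  "aK n = Fraction_Field.Fract (polvar (2 * n - 2)) 1"

definition bK :: "nat \<Rightarrow> 'f::field Kfield" where
  "bK n = Fraction_Field.Fract (polvar (2 * n - 1)) 1"

definition Fc :: "'f::field \<Rightarrow> 'f Rring" where
  "Fc c = Kc (Fraction_Field.Fract (polconst c) 1)"

definition xR :: "'f::field Rring" where
  "xR = fps_X"

definition yR :: "'f::field Rring" where
  "yR = fps_const fps_X"

definition fR :: "nat \<Rightarrow> 'f::field Rring" where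
  "fR n = Kc (aK n) * xR + Kc (bK n) * yR"

text \<open>The F-algebra endomorphism sigma of R from the context, characterised by its
  defining properties (these determine it uniquely).\<close>
definition is_sigma :: "('f::field Rring \<Rightarrow> 'f Rring) \<Rightarrow> bool" where
  "is_sigma \<sigma> \<longleftrightarrow>
     (\<forall>r s. \<sigma> (r + s) = \<sigma> r + \<sigma> s) \<and>
     (\<forall>r s. \<sigma> (r * s) = \<sigma> r * \<sigma> s) \<and>
     \<sigma> 1 = 1 \<and>
     (\<forall>c. \<sigma> (Fc c) = Fc c) \<and>
     \<sigma> xR = xR \<and> \<sigma> yR = yR \<and>
     (\<forall>n\<ge>1. \<sigma> (Kc (aK n)) = Kc (aK n) + yR * fR (n + 1)) \<and>
     (\<forall>n\<ge>1. \<sigma> (Kc (bK n)) = Kc (bK n) - xR * fR (n + 1))"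

definition invariant_set :: "('f::field Rring \<Rightarrow> 'f Rring) \<Rightarrow> 'f Rring set" where
  "invariant_set \<sigma> = {r. \<forall>g \<in> range (\<lambda>n::nat. \<sigma> ^^ n) \<union> range (\<lambda>n::nat. inv_into UNIV \<sigma> ^^ n). g r = r}"

definition subring_struct :: "'a::comm_ring_1 set \<Rightarrow> 'a ring" where
  "subring_struct S = \<lparr>carrier = S, monoid.mult = (*), one = 1, zero = 0, add = (+)\<rparr>"

end

theory Submission
  imports Defs
begin

text \<open>
  The automorphism \<open>\<sigma>\<close> fixes \<open>x\<close>, \<open>y\<close> and moves every constant of \<open>K\<close> only modulo \<open>\<frak>m\<^sup>2\<close>, so
  \<open>\<frak>m\<close>-adic approximation makes it bijective; since \<open>\<sigma>\<^sup>k(a\<^sub>n) = a\<^sub>n + k y f\<^sub>n\<^sub>+\<^sub>1\<close> and an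
  endomorphism fixing \<open>x\<close>, \<open>y\<close> and the generators of \<open>K\<close> is the identity, \<open>\<sigma>\<^sup>k = id\<close> exactly
  when \<open>char K\<close> divides \<open>k\<close>.

  Modulo \<open>\<frak>m\<^sup>3\<close>, \<open>\<sigma>\<close> acts on \<open>K\<close> as \<open>c \<mapsto> c + \<delta>(c) x y\<close> for a derivation \<open>\<delta>\<close> with
  \<open>\<delta>(a\<^sub>n) = a\<^sub>n\<^sub>+\<^sub>1\<close>, and \<open>\<delta>\<close> kills the constant term of every invariant. All \<open>f\<^sub>n\<close> are
  invariant. If \<open>R\<^sup>G\<close> were noetherian, the chain of ideals \<open>(f\<^sub>1, \<dots>, f\<^sub>N)\<close> of \<open>R\<^sup>G\<close> would
  become stationary, so \<open>f\<^sub>M\<^sub>+\<^sub>1 = \<Sum> c\<^sub>i f\<^sub>i\<close> with invariant \<open>c\<^sub>i\<close>. Comparing coefficients of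
  \<open>x\<close> and applying \<open>\<delta>\<close> repeatedly gives \<open>a\<^sub>M\<^sub>+\<^sub>1\<^sub>+\<^sub>t = \<Sum> \<gamma>\<^sub>i a\<^sub>i\<^sub>+\<^sub>t\<close> for all \<open>t\<close> with fixed
  \<open>\<gamma>\<^sub>i \<in> K\<close>, which is impossible for independent indeterminates once \<open>t\<close> exceeds the
  variables occurring in a common denominator of the \<open>\<gamma>\<^sub>i\<close>.
\<close>

unbundle fps_syntax

lemma fps_fps_mult_nth:
  "(a * b :: 'a::comm_semiring_1 fps fps) $ i $ j =
     (\<Sum>p=0..i. \<Sum>q=0..j. a $ p $ q * b $ (i - p) $ (j - q))"
  by (simp add: fps_mult_nth fps_sum_nth)

lemma fps_fps_mult_nth_10:
  "(a * b :: 'a::comm_semiring_1 fps fps) $ 1 $ 0 = a $ 0 $ 0 * b $ 1 $ 0 + a $ 1 $ 0 * b $ 0 $ 0"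
  by (simp add: fps_mult_nth_1)

lemma fps_fps_mult_nth_11:
  "(a * b :: 'a::comm_semiring_1 fps fps) $ 1 $ 1 =
     a $ 0 $ 0 * b $ 1 $ 1 + a $ 0 $ 1 * b $ 1 $ 0 + a $ 1 $ 0 * b $ 0 $ 1 + a $ 1 $ 1 * b $ 0 $ 0"
  by (simp add: fps_mult_nth_1 fps_add_nth add.assoc)

lemma Kc_nth: "Kc c $ i $ j = (if i = 0 \<and> j = 0 then c else 0)"
  by (simp add: Kc_def)

lemma xR_mult_nth: "(xR * r) $ i $ j = (if i = 0 then 0 else r $ (i - 1) $ j)"
  by (simp add: xR_def)

lemma yR_mult_nth: "(yR * r) $ i $ j = (if j = 0 then 0 else r $ i $ (j - 1))"
  by (simp add: yR_def)

lemma fR_nth: "fR n $ i $ j = (if i = 1 \<and> j = 0 then aK n else if i = 0 \<and> j = 1 then bK n else 0)"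
  by (auto simp: fR_def mult.commute[of _ xR] mult.commute[of _ yR] xR_mult_nth yR_mult_nth Kc_nth)

lemma Kc_add: "Kc (a + b) = Kc a + Kc b"
  by (simp add: Kc_def)

lemma Kc_mult: "Kc (a * b) = Kc a * Kc b"
  by (simp add: Kc_def)

lemma Kc_zero [simp]: "Kc 0 = 0"
  by (simp add: Kc_def)

lemma Kc_one [simp]: "Kc 1 = 1"
  by (simp add: Kc_def)

lemma aK_nonzero: "aK n \<noteq> (0 :: 'f::field Kfield)"
proof -
  have "polvar (2 * n - 2) \<noteq> (0 :: 'f Pol)"
    unfolding polvar_def by (metis lookup_single_eq lookup_zero one_neq_zero)
  then show ?thesis
    by (simp add: aK_def Zero_fract_def eq_fract)
qed

lemma yR_nonzero: "yR \<noteq> (0 :: 'f::field Rring)"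
  using arg_cong[of yR 0 "\<lambda>r. r $ 0 $ 1"] by (auto simp: yR_def)

lemma fR_nonzero: "fR n \<noteq> (0 :: 'f::field Rring)"
  using arg_cong[of "fR n" 0 "\<lambda>r. r $ 1 $ 0"] aK_nonzero by (auto simp: fR_nth)

definition x_tail :: "'a::zero fps fps \<Rightarrow> 'a fps fps" where
  "x_tail r = Abs_fps (\<lambda>i. r $ (i + 1))"

definition y_tail :: "'a::zero fps fps \<Rightarrow> 'a fps fps" where
  "y_tail r = fps_const (Abs_fps (\<lambda>j. r $ 0 $ (j + 1)))"

lemma x_tail_nth: "x_tail r $ i $ j = r $ (i + 1) $ j"
  by (simp add: x_tail_def)

lemma y_tail_nth: "y_tail r $ i $ j = (if i = 0 then r $ 0 $ (j + 1) else 0)"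
  by (simp add: y_tail_def)

lemma Rring_decompose: "r = Kc (r $ 0 $ 0) + xR * x_tail r + yR * y_tail r"
proof (rule fps_ext, rule fps_ext)
  fix i j
  show "r $ i $ j = (Kc (r $ 0 $ 0) + xR * x_tail r + yR * y_tail r) $ i $ j"
    unfolding fps_add_nth xR_mult_nth yR_mult_nth Kc_nth x_tail_nth y_tail_nth
    by (cases i; cases j) simp_all
qed

section \<open>The \<open>\<frak>m\<close>-adic filtration\<close>

text \<open>\<open>in_mpow k r\<close> says that \<open>r\<close> lies in \<open>\<frak>m\<^sup>k\<close>, where \<open>\<frak>m = (x, y)\<close>.\<close>

definition in_mpow :: "nat \<Rightarrow> 'a::zero fps fps \<Rightarrow> bool" where
  "in_mpow k r \<longleftrightarrow> (\<forall>i j. i + j < k \<longrightarrow> r $ i $ j = 0)"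

lemma in_mpow_0 [simp]: "in_mpow 0 r"
  by (simp add: in_mpow_def)

lemma in_mpow_zero [simp]: "in_mpow k 0"
  by (simp add: in_mpow_def)

lemma in_mpow_add: "in_mpow k a \<Longrightarrow> in_mpow k b \<Longrightarrow> in_mpow k (a + b :: 'a::monoid_add fps fps)"
  by (simp add: in_mpow_def)

lemma in_mpow_diff: "in_mpow k a \<Longrightarrow> in_mpow k b \<Longrightarrow> in_mpow k (a - b :: 'a::group_add fps fps)"
  by (simp add: in_mpow_def)

lemma in_mpow_uminus [simp]: "in_mpow k (- a :: 'a::group_add fps fps) \<longleftrightarrow> in_mpow k a"
  by (simp add: in_mpow_def)

lemma in_mpow_mono: "in_mpow k a \<Longrightarrow> j \<le> k \<Longrightarrow> in_mpow j a"
  by (simp add: in_mpow_def)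

lemma in_mpow_mult_left:
  assumes "in_mpow k b"
  shows "in_mpow k (a * b :: 'a::comm_semiring_1 fps fps)"
  unfolding in_mpow_def fps_fps_mult_nth
proof (intro allI impI)
  fix i j assume "i + j < k"
  then have "b $ (i - p) $ (j - q) = 0" for p q
    using assms by (simp add: in_mpow_def)
  then show "(\<Sum>p=0..i. \<Sum>q=0..j. a $ p $ q * b $ (i - p) $ (j - q)) = 0"
    by simp
qed

lemma in_mpow_mult_right: "in_mpow k a \<Longrightarrow> in_mpow k (a * b :: 'a::comm_semiring_1 fps fps)"
  by (metis in_mpow_mult_left mult.commute)

lemma in_mpow_xy_combination:
  "in_mpow k a \<Longrightarrow> in_mpow k b \<Longrightarrow> in_mpow (Suc k) (xR * a + yR * b)"
  unfolding in_mpow_def by (auto simp: xR_mult_nth yR_mult_nth)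

lemma in_mpow_Suc_tails:
  "in_mpow (Suc k) r \<Longrightarrow> r $ 0 $ 0 = 0 \<and> in_mpow k (x_tail r) \<and> in_mpow k (y_tail r)"
  unfolding in_mpow_def x_tail_nth y_tail_nth by auto

lemma in_mpow_2_xR_fR: "in_mpow 2 (xR * fR n)"
  by (simp add: in_mpow_def xR_mult_nth fR_nth)

lemma in_mpow_2_yR_fR: "in_mpow 2 (yR * fR n)"
  by (simp add: in_mpow_def yR_mult_nth fR_nth)

lemma eq_0_if_in_all_mpow: "(\<And>k. in_mpow k r) \<Longrightarrow> r = 0"
proof (rule fps_ext, rule fps_ext)
  fix i j assume "\<And>k. in_mpow k r"
  then have "in_mpow (i + j + 1) r" .
  then show "r $ i $ j = 0 $ i $ j"
    by (simp add: in_mpow_def)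
qed

lemma mpow_Cauchy_converges:
  assumes Cauchy: "\<And>k. in_mpow k (s (Suc k) - s k)"
  obtains r where "\<And>k. in_mpow k (r - s k :: 'a::ab_group_add fps fps)"
proof
  have stable: "s m $ i $ j = s k $ i $ j" if "k \<le> m" "i + j < k" for i j k m
    using that(1)
  proof (induction m rule: dec_induct)
    case (step m)
    then have "(s (Suc m) - s m) $ i $ j = 0"
      using Cauchy[of m] that(2) by (simp add: in_mpow_def)
    then show ?case
      using step.IH by simp
  qed simp
  define r where "r = Abs_fps (\<lambda>i. Abs_fps (\<lambda>j. s (i + j + 1) $ i $ j))"
  show "in_mpow k (r - s k)" for k
    unfolding in_mpow_def r_def using stable[of "Suc (i + j)" k i j for i j] by simp
qed

lemma update_eq_add_single:
  "a \<notin> Poly_Mapping.keys f \<Longrightarrow> Poly_Mapping.update a b f = f + Poly_Mapping.single a b"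
  by (rule poly_mapping_eqI) (auto simp: lookup_update lookup_add lookup_single in_keys_iff)

lemma polvar_power: "polvar a ^ k = Poly_Mapping.single (Poly_Mapping.single a k) (1 :: 'f::field)"
  by (induction k) (simp_all add: polvar_def mult_single single_add[symmetric])

lemma Fract_poly_induct:
  fixes P :: "'f::field Kfield \<Rightarrow> bool"
  assumes add: "\<And>a b. P a \<Longrightarrow> P b \<Longrightarrow> P (a + b)"
    and mult: "\<And>a b. P a \<Longrightarrow> P b \<Longrightarrow> P (a * b)"
    and const: "\<And>c. P (Fraction_Field.Fract (polconst c) 1)"
    and var: "\<And>i. P (Fraction_Field.Fract (polvar i) 1)"
  shows "P (Fraction_Field.Fract p 1)"
proof -
  have power: "P (Fraction_Field.Fract (polvar a ^ k) 1)" for a k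
  proof (induction k)
    case 0
    then show ?case using const[of 1] by (simp add: polconst_def)
  next
    case (Suc k)
    then show ?case using mult[OF var Suc.IH] by simp
  qed
  have monomial: "P (Fraction_Field.Fract (Poly_Mapping.single m c) 1)" for m c
  proof (induction m arbitrary: c rule: update_induct)
    case const
    then show ?case using assms(3) by (simp add: polconst_def)
  next
    case (update m a k)
    have "Poly_Mapping.single (Poly_Mapping.update a k m) c = Poly_Mapping.single m c * polvar a ^ k"
      using update(1) by (simp add: update_eq_add_single polvar_power mult_single)
    then show ?case using mult[OF update(3) power] by simp
  qed
  show ?thesis
  proof (induction p rule: update_induct)
    case const
    then show ?case using assms(3)[of 0] by (simp add: polconst_def)
  next
    case (update p m c)
    then show ?case using add[OF update(3) monomial] by (simp add: update_eq_add_single)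
  qed
qed

lemma Kfield_induct [case_names add mult const aK bK inverse]:
  fixes P :: "'f::field Kfield \<Rightarrow> bool"
  assumes add: "\<And>a b. P a \<Longrightarrow> P b \<Longrightarrow> P (a + b)"
    and mult: "\<And>a b. P a \<Longrightarrow> P b \<Longrightarrow> P (a * b)"
    and const: "\<And>c. P (Fraction_Field.Fract (polconst c) 1)"
    and aK: "\<And>n. n \<ge> 1 \<Longrightarrow> P (aK n)"
    and bK: "\<And>n. n \<ge> 1 \<Longrightarrow> P (bK n)"
    and inverse: "\<And>q. P q \<Longrightarrow> q \<noteq> 0 \<Longrightarrow> P (inverse q)"
  shows "P c"
proof -
  have var: "P (Fraction_Field.Fract (polvar i) 1)" for i
  proof (cases "even i")
    case True
    then show ?thesis using aK[of "i div 2 + 1"] by (simp add: aK_def)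
  next
    case False
    then show ?thesis using bK[of "(i + 1) div 2"] by (auto simp: bK_def elim!: oddE)
  qed
  obtain p q where c: "c = Fraction_Field.Fract p q" and "q \<noteq> 0"
    by (cases c)
  then have "Fraction_Field.Fract q 1 \<noteq> 0"
    by (simp add: Zero_fract_def eq_fract)
  then have "P (Fraction_Field.Fract p 1 * inverse (Fraction_Field.Fract q 1))"
    using Fract_poly_induct[OF add mult const var] by (metis inverse mult)
  then show ?thesis
    by (simp add: c)
qed

section \<open>Endomorphisms of \<open>R\<close> fixing \<open>x\<close> and \<open>y\<close>\<close>

lemma funpow_fixed_point: "f z = z \<Longrightarrow> (f ^^ n) z = z"
  by (induction n) simp_all

locale xy_hom =
  fixes \<tau> :: "'f::field Rring \<Rightarrow> 'f Rring"
  assumes hom_add: "\<tau> (r + s) = \<tau> r + \<tau> s"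
    and hom_mult: "\<tau> (r * s) = \<tau> r * \<tau> s"
    and fixes_x: "\<tau> xR = xR"
    and fixes_y: "\<tau> yR = yR"
begin

lemma hom_zero: "\<tau> 0 = 0"
  using hom_add[of 0 0] by (metis add.right_neutral add_left_cancel)

lemma hom_diff: "\<tau> (r - s) = \<tau> r - \<tau> s"
  using hom_add[of "r - s" s] by (simp add: algebra_simps)

lemma xy_hom_funpow: "xy_hom (\<tau> ^^ n)"
proof
  show "(\<tau> ^^ n) (r + s) = (\<tau> ^^ n) r + (\<tau> ^^ n) s" for r s
    by (induction n) (simp_all add: hom_add)
  show "(\<tau> ^^ n) (r * s) = (\<tau> ^^ n) r * (\<tau> ^^ n) s" for r s
    by (induction n) (simp_all add: hom_mult)
qed (simp_all add: funpow_fixed_point fixes_x fixes_y)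

lemma diff_decompose:
  "\<tau> r - r = (\<tau> (Kc (r $ 0 $ 0)) - Kc (r $ 0 $ 0))
     + (xR * (\<tau> (x_tail r) - x_tail r) + yR * (\<tau> (y_tail r) - y_tail r))"
proof -
  define c u v where "c = r $ 0 $ 0" and "u = x_tail r" and "v = y_tail r"
  have r: "r = Kc c + xR * u + yR * v"
    using Rring_decompose[of r] by (simp add: c_def u_def v_def)
  show ?thesis
    unfolding c_def[symmetric] u_def[symmetric] v_def[symmetric]
    by (simp add: r hom_add hom_mult fixes_x fixes_y algebra_simps)
qed

lemma in_mpow_diff_if_Kc:
  assumes "\<And>c. in_mpow d (\<tau> (Kc c) - Kc c)"
  shows "in_mpow d (\<tau> r - r)"
  using assms
proof (induction d arbitrary: r)
  case (Suc d)
  have tails: "in_mpow d (\<tau> s - s)" for s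
    using Suc.IH Suc.prems in_mpow_mono le_SucI by blast
  show ?case
    unfolding diff_decompose[of r] by (intro in_mpow_add in_mpow_xy_combination Suc.prems tails)
qed simp

lemma in_mpow_shift:
  assumes Kc: "\<And>c. in_mpow d (\<tau> (Kc c) - Kc c)" and "in_mpow k r"
  shows "in_mpow (k + d) (\<tau> r - r)"
  using assms(2)
proof (induction k arbitrary: r)
  case 0
  then show ?case using in_mpow_diff_if_Kc[OF Kc] by simp
next
  case (Suc k)
  then have "r $ 0 $ 0 = 0" "in_mpow k (x_tail r)" "in_mpow k (y_tail r)"
    using in_mpow_Suc_tails by blast+
  then show ?case
    using Suc.IH diff_decompose[of r] by (simp add: hom_zero in_mpow_xy_combination)
qed

lemma eq_id_if_fixes_Kc:
  assumes "\<And>c. \<tau> (Kc c) = Kc c"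
  shows "\<tau> = id"
proof
  fix r
  have "in_mpow d (\<tau> r - r)" for d
    by (rule in_mpow_diff_if_Kc) (simp add: assms)
  then show "\<tau> r = id r"
    using eq_0_if_in_all_mpow by fastforce
qed

lemma eq_id_if_fixes_generators:
  assumes Fc: "\<And>c. \<tau> (Fc c) = Fc c"
    and aK: "\<And>n. n \<ge> 1 \<Longrightarrow> \<tau> (Kc (aK n)) = Kc (aK n)"
    and bK: "\<And>n. n \<ge> 1 \<Longrightarrow> \<tau> (Kc (bK n)) = Kc (bK n)"
  shows "\<tau> = id"
proof (rule eq_id_if_fixes_Kc)
  have one: "\<tau> 1 = 1"
    using Fc[of 1] by (simp add: Fc_def polconst_def flip: One_fract_def)
  show "\<tau> (Kc c) = Kc c" for c
  proof (induction c rule: Kfield_induct)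
    case (inverse q)
    have "Kc q * \<tau> (Kc (inverse q)) = \<tau> (Kc (q * inverse q))"
      by (simp add: Kc_mult hom_mult inverse(1))
    also have "\<dots> = 1"
      using inverse(2) one by simp
    finally have "Kc (inverse q) * Kc q * \<tau> (Kc (inverse q)) = Kc (inverse q)"
      by (simp add: mult.assoc)
    then show ?case
      using inverse(2) by (simp flip: Kc_mult)
  qed (simp_all add: Kc_add Kc_mult hom_add hom_mult aK bK Fc[unfolded Fc_def])
qed

context
  assumes Kc_congruent: "\<And>c. in_mpow 1 (\<tau> (Kc c) - Kc c)"
begin

lemma in_mpow_Suc_diff: "in_mpow k r \<Longrightarrow> in_mpow (Suc k) (\<tau> r - r)"
  using in_mpow_shift[OF Kc_congruent] by simp

lemma in_mpow_image: "in_mpow k r \<Longrightarrow> in_mpow k (\<tau> r)"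
  using in_mpow_add[OF _ in_mpow_mono[OF in_mpow_Suc_diff]] by fastforce

lemma inj_if_Kc_congruent: "inj \<tau>"
proof (rule injI)
  fix r s assume "\<tau> r = \<tau> s"
  then have zero: "\<tau> (r - s) = 0"
    by (simp add: hom_diff)
  have "in_mpow k (r - s)" for k
  proof (induction k)
    case (Suc k)
    then show ?case using in_mpow_Suc_diff[OF Suc.IH] zero by (metis diff_0 in_mpow_uminus)
  qed simp
  then show "r = s"
    using eq_0_if_in_all_mpow[of "r - s"] by simp
qed

lemma surj_if_Kc_congruent: "surj \<tau>"
proof -
  have "\<exists>r. \<tau> r = s" for s
  proof -
    define approx where "approx = rec_nat s (\<lambda>_ a. a + (s - \<tau> a))"
    have approx_Suc: "approx (Suc k) = approx k + (s - \<tau> (approx k))" for k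
      by (simp add: approx_def)
    have error: "in_mpow k (s - \<tau> (approx k))" for k
    proof (induction k)
      case (Suc k)
      have "s - \<tau> (approx (Suc k)) = - (\<tau> (s - \<tau> (approx k)) - (s - \<tau> (approx k)))"
        by (simp add: approx_Suc hom_add)
      then show ?case
        by (metis in_mpow_Suc_diff[OF Suc.IH] in_mpow_uminus)
    qed simp
    have "in_mpow k (approx (Suc k) - approx k)" for k
      using error by (simp add: approx_Suc)
    then obtain r where r: "\<And>k. in_mpow k (r - approx k)"
      using mpow_Cauchy_converges by blast
    have "in_mpow k (\<tau> r - s)" for k
    proof -
      have "\<tau> r - s = \<tau> (r - approx k) - (s - \<tau> (approx k))"
        by (simp add: hom_diff)
      then show ?thesis
        using in_mpow_diff[OF in_mpow_image[OF r] error] by metis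
    qed
    then show ?thesis
      using eq_0_if_in_all_mpow[of "\<tau> r - s"] by auto
  qed
  then show ?thesis
    by (metis surjI)
qed

end

end

section \<open>The \<open>a\<^sub>n\<close> satisfy no linear recurrence\<close>

lemma Fract_sum: "Fraction_Field.Fract (\<Sum>i\<in>A. g i) 1 = (\<Sum>i\<in>A. Fraction_Field.Fract (g i) (1 :: 'a::idom))"
proof (induction A rule: infinite_finite_induct)
  case (insert x F)
  then show ?case
    by (simp flip: insert.IH)
qed (simp_all add: Zero_fract_def)

lemma common_denominator:
  fixes M :: nat
  shows "\<exists>p q. q \<noteq> (0 :: 'a::idom) \<and> (\<forall>i<M. \<gamma> i = Fraction_Field.Fract (p i) q)"
proof (induction M)
  case 0
  then show ?case by (intro exI[of _ "\<lambda>_. 0"] exI[of _ 1]) simp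
next
  case (Suc M)
  then obtain p q where q: "q \<noteq> 0" and pq: "\<forall>i<M. \<gamma> i = Fraction_Field.Fract (p i) q"
    by blast
  obtain p' q' where q': "q' \<noteq> 0" and \<gamma>M: "\<gamma> M = Fraction_Field.Fract p' q'"
    by (cases "\<gamma> M") blast
  have "\<gamma> i = Fraction_Field.Fract (if i < M then p i * q' else p' * q) (q * q')" if "i < Suc M" for i
    using that pq \<gamma>M q q' by (auto simp: less_Suc_eq eq_fract mult.commute mult.left_commute)
  then show ?case
    using q q' by (intro exI[of _ "\<lambda>i. if i < M then p i * q' else p' * q"] exI[of _ "q * q'"]) simp
qed

lemma lookup_mult_single_shift:
  fixes p :: "('a \<Rightarrow>\<^sub>0 nat) \<Rightarrow>\<^sub>0 'b::comm_semiring_1"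
  shows "Poly_Mapping.lookup (p * Poly_Mapping.single m 1) (l + m) = Poly_Mapping.lookup p l"
proof (induction p rule: update_induct)
  case (update f a b)
  then show ?case
    by (auto simp: update_eq_add_single distrib_right mult_single lookup_add lookup_single when_def)
qed simp

lemma lookup_mult_single_eq_0:
  fixes p :: "('a \<Rightarrow>\<^sub>0 nat) \<Rightarrow>\<^sub>0 'b::comm_semiring_1"
  assumes "\<And>l. k \<noteq> l + m"
  shows "Poly_Mapping.lookup (p * Poly_Mapping.single m 1) k = 0"
proof (induction p rule: update_induct)
  case (update f a b)
  then show ?case
    using assms by (auto simp: update_eq_add_single distrib_right mult_single lookup_add lookup_single when_def)
qed simp

text \<open>The monomial \<open>m\<^sub>0 v\<close>, with \<open>m\<^sub>0\<close> a monomial of \<open>q\<close>, occurs in \<open>q v\<close> but in no \<open>p\<^sub>i w\<^sub>i\<close>.\<close>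

lemma times_polvar_ne_sum:
  fixes q :: "'f::field Pol"
  assumes "q \<noteq> 0"
    and ne: "\<And>i. i < M \<Longrightarrow> w i \<noteq> v"
    and fresh: "\<And>i m. i < M \<Longrightarrow> m \<in> Poly_Mapping.keys q \<Longrightarrow> w i \<notin> Poly_Mapping.keys m"
  shows "q * polvar v \<noteq> (\<Sum>i<M. p i * polvar (w i))"
proof
  assume eq: "q * polvar v = (\<Sum>i<M. p i * polvar (w i))"
  obtain m0 where m0: "m0 \<in> Poly_Mapping.keys q"
    using assms(1) by fastforce
  define n where "n = m0 + Poly_Mapping.single v 1"
  have "Poly_Mapping.lookup (q * polvar v) n = Poly_Mapping.lookup q m0"
    unfolding n_def polvar_def by (rule lookup_mult_single_shift)
  then have lhs: "Poly_Mapping.lookup (q * polvar v) n \<noteq> 0"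
    using m0 by (simp add: in_keys_iff)
  have "Poly_Mapping.lookup (p i * polvar (w i)) n = 0" if "i < M" for i
    unfolding polvar_def
  proof (rule lookup_mult_single_eq_0)
    fix l
    have "Poly_Mapping.lookup n (w i) = Poly_Mapping.lookup m0 (w i)"
      using ne[OF that] by (simp add: n_def lookup_add lookup_single)
    also have "\<dots> = 0"
      using fresh[OF that m0] by (simp add: in_keys_iff)
    finally show "n \<noteq> l + Poly_Mapping.single (w i) 1"
      by (auto simp: lookup_add lookup_single)
  qed
  then have "Poly_Mapping.lookup (\<Sum>i<M. p i * polvar (w i)) n = 0"
    by (simp add: lookup_sum)
  then show False
    using lhs eq by simp
qed

lemma no_linear_recurrence_aK:
  fixes \<gamma> :: "nat \<Rightarrow> 'f::field Kfield"
  shows "\<exists>t. aK (M + 1 + t) \<noteq> (\<Sum>i<M. \<gamma> i * aK (i + 1 + t))"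
proof -
  obtain p q where q: "q \<noteq> (0 :: 'f Pol)" and pq: "\<forall>i<M. \<gamma> i = Fraction_Field.Fract (p i) q"
    using common_denominator by blast
  obtain t where t: "\<forall>m\<in>Poly_Mapping.keys q. \<forall>u\<in>Poly_Mapping.keys m. u < t"
    using finite_nat_set_iff_bounded[of "\<Union>m\<in>Poly_Mapping.keys q. Poly_Mapping.keys m"] by auto
  define v where "v = 2 * M + 2 * t"
  define w where "w i = 2 * i + 2 * t" for i
  have "q * polvar v \<noteq> (\<Sum>i<M. p i * polvar (w i))"
    by (rule times_polvar_ne_sum[OF q]) (use t in \<open>fastforce simp: v_def w_def\<close>)+
  then have "Fraction_Field.Fract (polvar v) 1 \<noteq> Fraction_Field.Fract (\<Sum>i<M. p i * polvar (w i)) q"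
    using q by (simp add: eq_fract mult.commute)
  moreover have "(\<Sum>i<M. \<gamma> i * aK (i + 1 + t)) = Fraction_Field.Fract (\<Sum>i<M. p i * polvar (w i)) q"
  proof -
    have "(\<Sum>i<M. \<gamma> i * aK (i + 1 + t))
        = (\<Sum>i<M. Fraction_Field.Fract (p i * polvar (w i)) 1) * Fraction_Field.Fract 1 q"
      by (simp add: sum_distrib_right pq aK_def w_def)
    then show ?thesis
      by (simp flip: Fract_sum)
  qed
  moreover have "aK (M + 1 + t) = Fraction_Field.Fract (polvar v) 1"
    by (simp add: aK_def v_def)
  ultimately have "aK (M + 1 + t) \<noteq> (\<Sum>i<M. \<gamma> i * aK (i + 1 + t))"
    by metis
  then show ?thesis ..
qed

section \<open>Noetherian subrings\<close>

definition combinations :: "'a::comm_ring_1 set \<Rightarrow> (nat \<Rightarrow> 'a) \<Rightarrow> nat \<Rightarrow> 'a set" where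
  "combinations S g N = {\<Sum>i<N. c i * g i | c. \<forall>i<N. c i \<in> S}"

lemma combinationsI: "(\<And>i. i < N \<Longrightarrow> c i \<in> S) \<Longrightarrow> (\<Sum>i<N. c i * g i) \<in> combinations S g N"
  by (auto simp: combinations_def)

context
  fixes S :: "'a::comm_ring_1 set"
  assumes ring_S: "ring (subring_struct S)"
begin

interpretation S: ring "subring_struct S"
  by (fact ring_S)

lemma subring_struct_zero: "0 \<in> S"
  and subring_struct_one: "1 \<in> S"
  and subring_struct_add: "a \<in> S \<Longrightarrow> b \<in> S \<Longrightarrow> a + b \<in> S"
  and subring_struct_mult: "a \<in> S \<Longrightarrow> b \<in> S \<Longrightarrow> a * b \<in> S"
  using S.zero_closed S.one_closed S.a_closed S.m_closed by (simp_all add: subring_struct_def)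

lemma subring_struct_a_inv: "a \<in> S \<Longrightarrow> \<ominus>\<^bsub>subring_struct S\<^esub> a = - a"
  using S.l_neg[of a] by (simp add: subring_struct_def eq_neg_iff_add_eq_0)

lemma subring_struct_uminus: "a \<in> S \<Longrightarrow> - a \<in> S"
  using S.a_inv_closed[of a] subring_struct_a_inv by (simp add: subring_struct_def)

lemma combinations_subset: "range g \<subseteq> S \<Longrightarrow> combinations S g N \<subseteq> S"
proof
  fix r assume "range g \<subseteq> S" "r \<in> combinations S g N"
  then obtain c where "\<forall>i<N. c i \<in> S" "r = (\<Sum>i<N. c i * g i)"
    by (auto simp: combinations_def)
  then show "r \<in> S"
    using \<open>range g \<subseteq> S\<close>
  proof (induction N arbitrary: r)
    case (Suc N)
    then show ?case
      by (auto intro!: subring_struct_add subring_struct_mult)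
  qed (simp add: subring_struct_zero)
qed

lemma combinations_zero: "0 \<in> combinations S g N"
  using combinationsI[where c="\<lambda>_. 0"] subring_struct_zero by simp

lemma combinations_add:
  assumes "a \<in> combinations S g N" and "b \<in> combinations S g N"
  shows "a + b \<in> combinations S g N"
proof -
  obtain c d where c: "\<forall>i<N. c i \<in> S" and a: "a = (\<Sum>i<N. c i * g i)"
    and d: "\<forall>i<N. d i \<in> S" and b: "b = (\<Sum>i<N. d i * g i)"
    using assms by (auto simp: combinations_def)
  have "a + b = (\<Sum>i<N. (c i + d i) * g i)"
    by (simp add: a b sum.distrib distrib_right)
  moreover have "\<forall>i<N. c i + d i \<in> S"
    using c d by (simp add: subring_struct_add)
  ultimately show ?thesis
    by (simp add: combinationsI)
qed

lemma combinations_scale: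
  assumes "a \<in> combinations S g N" and x: "x \<in> S"
  shows "x * a \<in> combinations S g N"
proof -
  obtain c where c: "\<forall>i<N. c i \<in> S" and a: "a = (\<Sum>i<N. c i * g i)"
    using assms(1) by (auto simp: combinations_def)
  have "x * a = (\<Sum>i<N. (x * c i) * g i)"
    by (simp add: a sum_distrib_left mult.assoc)
  moreover have "\<forall>i<N. x * c i \<in> S"
    using c x by (simp add: subring_struct_mult)
  ultimately show ?thesis
    by (simp add: combinationsI)
qed

lemma combinations_mono: "N \<le> N' \<Longrightarrow> combinations S g N \<subseteq> combinations S g N'"
proof
  fix r assume "N \<le> N'" "r \<in> combinations S g N"
  then obtain c where c: "\<forall>i<N. c i \<in> S" and r: "r = (\<Sum>i<N. c i * g i)"
    by (auto simp: combinations_def)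
  define c' where "c' i = (if i < N then c i else 0)" for i
  have "r = (\<Sum>i<N'. c' i * g i)"
    using \<open>N \<le> N'\<close> unfolding r c'_def by (intro sum.mono_neutral_cong_left) auto
  moreover have "\<forall>i<N'. c' i \<in> S"
    using c subring_struct_zero by (simp add: c'_def)
  ultimately show "r \<in> combinations S g N'"
    by (simp add: combinationsI)
qed

lemma generator_in_combinations:
  assumes "i < N"
  shows "g i \<in> combinations S g N"
proof -
  have "(\<Sum>j<N. (if j = i then 1 else 0) * g j) = (\<Sum>j<N. if j = i then g j else 0)"
    by (rule sum.cong) auto
  then have "g i = (\<Sum>j<N. (if j = i then 1 else 0) * g j)"
    using assms by simp
  also have "\<dots> \<in> combinations S g N"
    by (rule combinationsI) (simp add: subring_struct_zero subring_struct_one)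
  finally show ?thesis .
qed

lemma ideal_combinations:
  assumes "range g \<subseteq> S"
  shows "ideal (combinations S g N) (subring_struct S)"
proof (rule idealI[OF ring_S])
  show "subgroup (combinations S g N) (add_monoid (subring_struct S))"
  proof (rule S.add.subgroupI)
    show "combinations S g N \<subseteq> carrier (subring_struct S)"
      using combinations_subset[OF assms] by (simp add: subring_struct_def)
    show "combinations S g N \<noteq> {}"
      using combinations_zero by blast
    show "\<ominus>\<^bsub>subring_struct S\<^esub> a \<in> combinations S g N" if "a \<in> combinations S g N" for a
    proof -
      have "a \<in> S"
        using that combinations_subset[OF assms] by blast
      then show ?thesis
        using combinations_scale[OF that subring_struct_uminus[OF subring_struct_one]] by (simp add: subring_struct_a_inv)
    qed
    show "a \<oplus>\<^bsub>subring_struct S\<^esub> b \<in> combinations S g N"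
      if "a \<in> combinations S g N" "b \<in> combinations S g N" for a b
      using combinations_add[OF that] by (simp add: subring_struct_def)
  qed
next
  fix a x assume "a \<in> combinations S g N" and "x \<in> carrier (subring_struct S)"
  then have xa: "x * a \<in> combinations S g N"
    by (simp add: combinations_scale subring_struct_def)
  then show "x \<otimes>\<^bsub>subring_struct S\<^esub> a \<in> combinations S g N"
    by (simp add: subring_struct_def)
  from xa show "a \<otimes>\<^bsub>subring_struct S\<^esub> x \<in> combinations S g N"
    by (simp add: subring_struct_def mult.commute)
qed

end

lemma noetherian_recurrence:
  assumes noeth: "noetherian_ring (subring_struct S)" and g: "range g \<subseteq> S"
  obtains M where "g M \<in> combinations S g M"
proof -
  interpret noetherian_ring "subring_struct S"
    by (fact noeth)
  have ring_S: "ring (subring_struct S)"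
    by (fact ring_axioms)
  have "\<Union>(range (combinations S g)) \<in> range (combinations S g)"
  proof (rule ideal_chain_is_trivial)
    have "combinations S g m \<subseteq> combinations S g n \<or> combinations S g n \<subseteq> combinations S g m" for m n
      using combinations_mono[OF ring_S] nat_le_linear by blast
    then show "subset.chain {I. ideal I (subring_struct S)} (range (combinations S g))"
      using ideal_combinations[OF ring_S g] by (auto simp: subset_chain_def)
  qed simp
  then obtain M where "\<Union>(range (combinations S g)) = combinations S g M"
    by blast
  moreover have "g M \<in> combinations S g (Suc M)"
    by (rule generator_in_combinations[OF ring_S]) simp
  ultimately show thesis
    using that by blast
qed

section \<open>The automorphism \<open>\<sigma>\<close>\<close>

lemma invariant_set_eq_fixed_points:
  assumes "inj \<sigma>"
  shows "invariant_set \<sigma> = {r. \<sigma> r = r}"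
proof (intro equalityI subsetI)
  fix r assume "r \<in> invariant_set \<sigma>"
  then have "(\<sigma> ^^ 1) r = r"
    unfolding invariant_set_def by blast
  then show "r \<in> {r. \<sigma> r = r}"
    by simp
next
  fix r assume "r \<in> {r. \<sigma> r = r}"
  then have "\<sigma> r = r" "inv_into UNIV \<sigma> r = r"
    using assms by (auto intro: inv_f_eq)
  then show "r \<in> invariant_set \<sigma>"
    by (auto simp: invariant_set_def funpow_fixed_point)
qed

locale sigma_map =
  fixes \<sigma> :: "'f::field Rring \<Rightarrow> 'f Rring"
  assumes is_sigma: "is_sigma \<sigma>"
begin

sublocale xy_hom \<sigma>
  using is_sigma unfolding is_sigma_def by unfold_locales blast+

lemma sigma_one: "\<sigma> 1 = 1"
  and sigma_Fc: "\<sigma> (Fc c) = Fc c"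
  and sigma_aK: "n \<ge> 1 \<Longrightarrow> \<sigma> (Kc (aK n)) = Kc (aK n) + yR * fR (n + 1)"
  and sigma_bK: "n \<ge> 1 \<Longrightarrow> \<sigma> (Kc (bK n)) = Kc (bK n) - xR * fR (n + 1)"
  using is_sigma unfolding is_sigma_def by blast+

lemma sigma_fR: "n \<ge> 1 \<Longrightarrow> \<sigma> (fR n) = fR n"
  unfolding fR_def by (simp add: hom_add hom_mult sigma_aK sigma_bK fixes_x fixes_y algebra_simps)

lemma sigma_Kc_congruent: "in_mpow 2 (\<sigma> (Kc c) - Kc c)"
proof (induction c rule: Kfield_induct)
  case (add a b)
  then show ?case
    by (simp add: Kc_add hom_add add_diff_add in_mpow_add)
next
  case (mult a b)
  have "\<sigma> (Kc (a * b)) - Kc (a * b) = (\<sigma> (Kc a) - Kc a) * \<sigma> (Kc b) + Kc a * (\<sigma> (Kc b) - Kc b)"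
    by (simp add: Kc_mult hom_mult algebra_simps)
  then show ?case
    using mult by (simp add: in_mpow_add in_mpow_mult_left in_mpow_mult_right)
next
  case (const c)
  then show ?case
    using sigma_Fc[of c] by (simp add: Fc_def)
next
  case (aK n)
  then show ?case
    by (simp add: sigma_aK in_mpow_2_yR_fR)
next
  case (bK n)
  then show ?case
    by (simp add: sigma_bK in_mpow_2_xR_fR)
next
  case (inverse q)
  have prod: "\<sigma> (Kc q) * \<sigma> (Kc (inverse q)) = 1"
    using inverse(2) by (simp flip: hom_mult Kc_mult add: sigma_one)
  have inv: "Kc (inverse q) * Kc q = 1"
    using inverse(2) by (simp flip: Kc_mult)
  have "Kc (inverse q) * (\<sigma> (Kc q) - Kc q) * \<sigma> (Kc (inverse q))
      = Kc (inverse q) * (\<sigma> (Kc q) * \<sigma> (Kc (inverse q)))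
        - Kc (inverse q) * Kc q * \<sigma> (Kc (inverse q))"
    by (simp add: algebra_simps)
  also have "\<dots> = - (\<sigma> (Kc (inverse q)) - Kc (inverse q))"
    using prod inv by simp
  finally show ?case
    using inverse(1) by (metis in_mpow_mult_left in_mpow_mult_right in_mpow_uminus)
qed

lemma sigma_congruent: "in_mpow k r \<Longrightarrow> in_mpow (k + 2) (\<sigma> r - r)"
  by (rule in_mpow_shift[OF sigma_Kc_congruent])

lemma bij_sigma: "bij \<sigma>"
proof -
  have "in_mpow 1 (\<sigma> (Kc c) - Kc c)" for c
    using sigma_Kc_congruent by (rule in_mpow_mono) simp
  then show ?thesis
    using inj_if_Kc_congruent surj_if_Kc_congruent by (simp add: bij_def)
qed

lemma sigma_nth_low: "i + j < 2 \<Longrightarrow> \<sigma> r $ i $ j = r $ i $ j"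
  using sigma_congruent[of 0 r] by (simp add: in_mpow_def)

text \<open>Modulo \<open>\<frak>m\<^sup>3\<close>, \<open>\<sigma>\<close> acts on constants as \<open>c \<mapsto> c + der c \<cdot> x y\<close>.\<close>

definition der :: "'f Kfield \<Rightarrow> 'f Kfield" where
  "der c = \<sigma> (Kc c) $ 1 $ 1"

lemma der_add: "der (a + b) = der a + der b"
  by (simp add: der_def Kc_add hom_add)

lemma der_mult: "der (a * b) = a * der b + der a * b"
  unfolding der_def Kc_mult hom_mult fps_fps_mult_nth_11
  by (simp add: sigma_nth_low Kc_nth mult.commute)

lemma der_zero: "der 0 = 0"
  by (simp add: der_def hom_zero)

lemma der_sum: "der (\<Sum>i\<in>A. f i) = (\<Sum>i\<in>A. der (f i))"
  by (induction A rule: infinite_finite_induct) (simp_all add: der_zero der_add)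

lemma der_aK: "n \<ge> 1 \<Longrightarrow> der (aK n) = aK (n + 1)"
  unfolding der_def by (simp only: sigma_aK fps_add_nth yR_mult_nth Kc_nth fR_nth) simp

lemma sigma_nth_11: "\<sigma> r $ 1 $ 1 = der (r $ 0 $ 0) + r $ 1 $ 1"
proof -
  let ?r' = "r - Kc (r $ 0 $ 0)"
  have "in_mpow 1 ?r'"
    by (simp add: in_mpow_def Kc_nth)
  then have "(\<sigma> ?r' - ?r') $ 1 $ 1 = 0"
    using sigma_congruent[of 1 ?r'] by (simp add: in_mpow_def)
  then show ?thesis
    by (simp add: hom_diff der_def Kc_nth algebra_simps)
qed

lemma der_const_coeff_fixed: "\<sigma> r = r \<Longrightarrow> der (r $ 0 $ 0) = 0"
  using sigma_nth_11[of r] by simp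

lemma sigma_of_nat: "\<sigma> (of_nat k) = of_nat k"
  by (induction k) (simp_all add: hom_add hom_zero sigma_one)

lemma funpow_sigma_aK:
  assumes "n \<ge> 1"
  shows "(\<sigma> ^^ k) (Kc (aK n)) = Kc (aK n) + of_nat k * (yR * fR (n + 1))"
proof (induction k)
  case (Suc k)
  have "(\<sigma> ^^ Suc k) (Kc (aK n)) = (Kc (aK n) + yR * fR (n + 1)) + of_nat k * (yR * fR (n + 1))"
    using assms by (simp only: funpow.simps comp_def Suc hom_add hom_mult sigma_aK sigma_of_nat
        fixes_y sigma_fR le_add2)
  then show ?case
    by (simp add: algebra_simps)
qed simp

lemma funpow_sigma_bK:
  assumes "n \<ge> 1"
  shows "(\<sigma> ^^ k) (Kc (bK n)) = Kc (bK n) - of_nat k * (xR * fR (n + 1))"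
proof (induction k)
  case (Suc k)
  have "(\<sigma> ^^ Suc k) (Kc (bK n)) = (Kc (bK n) - xR * fR (n + 1)) - of_nat k * (xR * fR (n + 1))"
    using assms by (simp only: funpow.simps comp_def Suc hom_diff hom_mult sigma_bK sigma_of_nat
        fixes_x sigma_fR le_add2)
  then show ?case
    by (simp add: algebra_simps)
qed simp

lemma funpow_sigma_eq_id_iff: "\<sigma> ^^ k = id \<longleftrightarrow> CHAR('f Kfield) dvd k"
proof
  assume "\<sigma> ^^ k = id"
  then have "(of_nat k :: 'f Rring) = 0"
    using funpow_sigma_aK[of 1 k] by (simp add: yR_nonzero fR_nonzero)
  then show "CHAR('f Kfield) dvd k"
    by (simp add: of_nat_eq_0_iff_char_dvd)
next
  assume "CHAR('f Kfield) dvd k"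
  then have k: "(of_nat k :: 'f Rring) = 0"
    by (simp add: of_nat_eq_0_iff_char_dvd)
  interpret power: xy_hom "\<sigma> ^^ k"
    by (fact xy_hom_funpow)
  show "\<sigma> ^^ k = id"
    by (rule power.eq_id_if_fixes_generators)
      (simp_all add: funpow_fixed_point sigma_Fc funpow_sigma_aK funpow_sigma_bK k)
qed

lemma aK_recurrence_shift:
  assumes rel: "aK (M + 1) = (\<Sum>i<M. \<gamma> i * aK (i + 1))"
    and der: "\<And>i. i < M \<Longrightarrow> der (\<gamma> i) = 0"
  shows "aK (M + 1 + t) = (\<Sum>i<M. \<gamma> i * aK (i + 1 + t))"
proof (induction t)
  case (Suc t)
  have "aK (M + 1 + Suc t) = der (aK (M + 1 + t))"
    by (simp add: der_aK)
  also have "\<dots> = (\<Sum>i<M. der (\<gamma> i * aK (i + 1 + t)))"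
    by (simp only: Suc der_sum)
  also have "\<dots> = (\<Sum>i<M. \<gamma> i * aK (i + 1 + Suc t))"
    by (rule sum.cong) (simp_all add: der_mult der der_aK)
  finally show ?case .
qed (use rel in simp)

theorem not_noetherian_invariant_ring: "\<not> noetherian_ring (subring_struct (invariant_set \<sigma>))"
proof
  assume noeth: "noetherian_ring (subring_struct (invariant_set \<sigma>))"
  have invariant: "invariant_set \<sigma> = {r. \<sigma> r = r}"
    using bij_sigma by (simp add: bij_is_inj invariant_set_eq_fixed_points)
  have "range (\<lambda>i. fR (i + 1)) \<subseteq> invariant_set \<sigma>"
    by (auto simp: invariant sigma_fR)
  then obtain M where "fR (M + 1) \<in> combinations (invariant_set \<sigma>) (\<lambda>i. fR (i + 1)) M"
    using noetherian_recurrence[OF noeth] by blast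
  then obtain c where c: "\<And>i. i < M \<Longrightarrow> \<sigma> (c i) = c i"
    and f: "fR (M + 1) = (\<Sum>i<M. c i * fR (i + 1))"
    by (auto simp: combinations_def invariant)
  \<comment> \<open>compare the coefficients of \<open>x\<close>\<close>
  have "aK (M + 1) = fR (M + 1) $ 1 $ 0"
    by (simp add: fR_nth)
  also have "\<dots> = (\<Sum>i<M. (c i * fR (i + 1)) $ 1 $ 0)"
    by (simp only: f fps_sum_nth)
  also have "\<dots> = (\<Sum>i<M. c i $ 0 $ 0 * aK (i + 1))"
    by (simp add: fps_fps_mult_nth_10 fR_nth)
  finally have "aK (M + 1 + t) = (\<Sum>i<M. c i $ 0 $ 0 * aK (i + 1 + t))" for t
    by (rule aK_recurrence_shift) (simp add: c der_const_coeff_fixed)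
  then show False
    using no_linear_recurrence_aK[of M "\<lambda>i. c i $ 0 $ 0"] by blast
qed

end

theorem mainTheorem1:
  fixes \<sigma> :: "'f::field Rring \<Rightarrow> 'f Rring"
  assumes "is_sigma \<sigma>"
  shows "bij \<sigma>
    \<and> (CHAR('f Kfield) > 0 \<longrightarrow>
         (\<sigma> ^^ CHAR('f Kfield) = id \<and> (\<forall>k. 0 < k \<and> k < CHAR('f Kfield) \<longrightarrow> \<sigma> ^^ k \<noteq> id)))
    \<and> (CHAR('f Kfield) = 0 \<longrightarrow> (\<forall>k::nat. k > 0 \<longrightarrow> \<sigma> ^^ k \<noteq> id))
    \<and> \<not> noetherian_ring (subring_struct (invariant_set \<sigma>))"
proof -
  interpret sigma_map \<sigma>
    using assms by unfold_locales
  show ?thesis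
    using bij_sigma funpow_sigma_eq_id_iff not_noetherian_invariant_ring
    by (auto dest: nat_dvd_not_less)
qed

end
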